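(* Let $L_1$ be a fixed point of $L_1^+=(\mathbf{C}_1+\mathbf{D}_1L_1)(\mathbf{A}_1+\mathbf{B}_1L_1)^{-1}$ and let $L_2$ be defined by $L_2^\top = -(B_1 +D_1L_1)(A_1 + B_1^\top L_1)^{-1}$. Then these define the similarity transforms \[ \begin{bmatrix} I & 0 \\-L_1 & I \end{bmatrix} \begin{bmatrix} \mathbf{A}_1 & \mathbf{B}_1\\ \mathbf{C}_1 & \mathbf{D}_1 \end{bmatrix} \begin{bmatrix} I & 0 \\ L_1 & I \end{bmatrix} = \begin{bmatrix} \mathbf{H}_1 & \mathbf{B}_1 \\ 0 & \mathbf{H}_1' \end{bmatrix}, \qquad \begin{bmatrix} I & -L_2\\ 0 & I \end{bmatrix} \begin{bmatrix} \mathbf{D}_2 & \mathbf{C}_2\\ \mathbf{B}_2 & \mathbf{A}_2 \end{bmatrix} \begin{bmatrix} I & L_2 \\ 0 & I \end{bmatrix} = \begin{bmatrix} \mathbf{H}_2' & 0 \\ \mathbf{B}_2 & \mathbf{H}_2 \end{bmatrix}, \] where $\mathbf{H}_1 = \mathbf{A}_1 + \mathbf{B}_1L_1$, $\mathbf{H}_1' = \mathbf{D}_1 -L_1 \mathbf{B}_1$, $\mathbf{H}_2 = \mathbf{A}_2 + \mathbf{B}_2 L_2$, and $\mathbf{H}_2' = \mathbf{D}_2 - L_2 \mathbf{B}_2$. Furthermore, the spectrum of the $\mathbf{M}_1$-invariant subspace spanned by $[I; L_1]$ is $\operatorname{spec}(\mathbf{H}_1)$, the spectrum of the $\mathbf{M}_2$-invariant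 subspace spanned by $[L_2; I]$ is $\operatorname{spec}(\mathbf{H}_2)$, \[ \mathbf{H}_1 = \mathbf{A}_1 + \mathbf{B}_1L_1 = (D_2^\top + B_2 L_1 )^{-1}(A_1 + B_1^\top L_1 ), \qquad \mathbf{H}_2' = \mathbf{D}_2 - L_2 \mathbf{B}_2 = (A_1 + B_1^\top L_1)^{-\top}(D_2^\top + B_2L_1)^\top, \] and $\mathbf{H}_2'$ is similar to $\mathbf{H}_1^{-\top}$.
   Context: Two-player quadratic game with cost blocks $A_i\succ 0$, $B_i\in\mathbb{R}^{d_{-i}\times d_i}$, $D_i$ for player $i$ (cost $f_i=\tfrac12[x_i;x_{-i}]^\top\begin{bmatrix}A_i & B_i^\top\\ B_i& D_i\end{bmatrix}[x_i;x_{-i}]+a_i^\top x_i+b_i^\top x_{-i}$, $x_i\in\mathbb{R}^{d_i}$), affine conjectures $x_{-i}=L_ix_i+\ell_i$. $M_1=\begin{bmatrix}A_1 & B_1^\top\\ B_1 & D_1\end{bmatrix}$ and $M_2=\begin{bmatrix}D_2 & B_2\\ B_2^\top & A_2\end{bmatrix}$ are invertible; $\mathbf{M}_1=M_2^{-\top}M_1=\begin{bmatrix}\mathbf{A}_1 & \mathbf{B}_1\\ \mathbf{C}_1 & \mathbf{D}_1\end{bmatrix}$ and $\mathbf{M}_2=M_1^{-\top}M_2=\begin{bmatrix}\mathbf{D}_2 & \mathbf{C}_2\\ \mathbf{B}_2 & \mathbf{A}_2\end{bmatrix}$. The fixed-point update for $L_1$ is the composite best-response conjecture update; $L_2$ is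 player 2's consistent conjecture given $L_1$ (assuming $A_1 + B_1^\top L_1$ invertible). $I$ denotes the identity matrix of appropriate size. *)

theory Defs
  imports "Jordan_Normal_Form.Matrix" "Jordan_Normal_Form.Char_Poly"
          "Jordan_Normal_Form.Gauss_Jordan_Elimination"
begin

definition inv_mat :: "real mat \<Rightarrow> real mat" where
  "inv_mat A = the (mat_inverse A)"

definition pos_def_mat :: "real mat \<Rightarrow> bool" where
  "pos_def_mat A \<longleftrightarrow> A \<in> carrier_mat (dim_row A) (dim_row A) \<and> transpose_mat A = A \<and>
     (\<forall>x \<in> carrier_vec (dim_row A). x \<noteq> 0\<^sub>v (dim_row A) \<longrightarrow> x \<bullet> (A *\<^sub>v x) > 0)"

definition spec_mat :: "real mat \<Rightarrow> complex set" where
  "spec_mat H = {z. eigenvalue (map_mat complex_of_real H) z}"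

definition subspace_spec :: "real mat \<Rightarrow> real mat \<Rightarrow> complex set" where
  "subspace_spec M V = {z. \<exists>x \<in> carrier_vec (dim_col V).
      let v = map_mat complex_of_real V *\<^sub>v x in
        v \<noteq> 0\<^sub>v (dim_row V) \<and> map_mat complex_of_real M *\<^sub>v v = z \<cdot>\<^sub>v v}"

end

(* The fixed-point equation for L1 is the algebraic Riccati equation C1b + D1b L1 = L1 H1
   with H1 = A1b + B1b L1: the graph [I; L1] is invariant under M1b with restriction H1.
   Applying M2^T M1b = M1 to [I; L1] gives (D2^T + B2 L1) H1 = A1 + B1^T L1 and
   (B2^T + A2 L1) H1 = B1 + D1 L1, hence the formula for H1. As -L2^T (A1 + B1^T L1) =
   B1 + D1 L1 by definition of L2, both M1 and M2^T map [I; L1] into the column space of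
   [I; -L2^T], which is therefore invariant under M2b^T = M2^T M1^-1. Transposing, [L2; I]
   spans an M2b-invariant subspace with restriction H2, L2 solves the corresponding Riccati
   equation, and H2' = (A1 + B1^T L1)^-T (D2^T + B2 L1)^T is conjugate to the transpose of
   H1^-1 = (A1 + B1^T L1)^-1 (D2^T + B2 L1). *)

theory Submission imports Defs begin

(* Ring laws for matrices with dimension equations as side conditions, which simp can
   discharge from carrier facts. *)
lemma add_mult_distrib_mat_dim:
  fixes A B C :: "'a :: semiring_0 mat"
  assumes "dim_row A = dim_row B" "dim_col A = dim_col B" "dim_col B = dim_row C"
  shows "(A + B) * C = A * C + B * C"
  by (rule add_mult_distrib_mat[of _ "dim_row B" "dim_col B" _ _ "dim_col C"]) (use assms in auto)

lemma mult_add_distrib_mat_dim: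
  fixes A B C :: "'a :: semiring_0 mat"
  assumes "dim_row B = dim_row C" "dim_col B = dim_col C" "dim_col A = dim_row B"
  shows "A * (B + C) = A * B + A * C"
  by (rule mult_add_distrib_mat[of _ "dim_row A" "dim_row B" _ "dim_col B"]) (use assms in auto)

lemma minus_mult_distrib_mat_dim:
  fixes A B C :: "'a :: ring mat"
  assumes "dim_row A = dim_row B" "dim_col A = dim_col B" "dim_col B = dim_row C"
  shows "(A - B) * C = A * C - B * C"
  by (rule minus_mult_distrib_mat[of _ "dim_row B" "dim_col B" _ _ "dim_col C"]) (use assms in auto)

lemma assoc_mult_mat_dim:
  fixes A B C :: "'a :: semiring_0 mat"
  assumes "dim_col A = dim_row B" "dim_col B = dim_row C"
  shows "A * B * C = A * (B * C)"
  by (rule assoc_mult_mat[of _ "dim_row A" "dim_row B" _ "dim_row C" _ "dim_col C"])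
    (use assms in auto)

lemma transpose_mult_dim:
  fixes A B :: "'a :: comm_semiring_0 mat"
  assumes "dim_col A = dim_row B"
  shows "transpose_mat (A * B) = transpose_mat B * transpose_mat A"
  by (rule transpose_mult[of _ "dim_row A" "dim_row B" _ "dim_col B"]) (use assms in auto)

lemmas mat_ring_dim = add_mult_distrib_mat_dim mult_add_distrib_mat_dim
  minus_mult_distrib_mat_dim assoc_mult_mat_dim

lemma inv_mat:
  fixes A :: "real mat"
  assumes A: "A \<in> carrier_mat n n" and inv: "invertible_mat A"
  shows "inv_mat A \<in> carrier_mat n n" "A * inv_mat A = 1\<^sub>m n" "inv_mat A * A = 1\<^sub>m n"
proof -
  from inv obtain B where AB: "A * B = 1\<^sub>m n" and BA: "B * A = 1\<^sub>m (dim_row B)"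
    using A unfolding invertible_mat_def inverts_mat_def by auto
  have B: "B \<in> carrier_mat n n"
    using arg_cong[OF AB, of dim_col] arg_cong[OF BA, of dim_col] A by auto
  have "A \<in> Units (ring_mat TYPE(real) n ())"
    unfolding Units_def ring_mat_simps using A B AB BA by auto
  then obtain C where C: "mat_inverse A = Some C"
    using mat_inverse(1)[OF A] by fastforce
  then show "inv_mat A \<in> carrier_mat n n" "A * inv_mat A = 1\<^sub>m n" "inv_mat A * A = 1\<^sub>m n"
    using mat_inverse(2)[OF A C] unfolding inv_mat_def by auto
qed

lemma invertible_matI:
  fixes A B :: "real mat"
  assumes "A \<in> carrier_mat n n" "B \<in> carrier_mat n n" "A * B = 1\<^sub>m n"
  shows "invertible_mat A"
  using assms mat_mult_left_right_inverse[OF assms]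
  unfolding invertible_mat_def inverts_mat_def by auto

lemma inv_mat_eqI:
  fixes A B :: "real mat"
  assumes A: "A \<in> carrier_mat n n" and B: "B \<in> carrier_mat n n" and AB: "A * B = 1\<^sub>m n"
  shows "inv_mat A = B"
proof -
  note A' = inv_mat[OF A invertible_matI[OF A B AB]]
  have "inv_mat A = inv_mat A * (A * B)" using AB A'(1) by simp
  also have "\<dots> = B" using A'(1,3) A B by (simp add: assoc_mult_mat_dim[symmetric])
  finally show ?thesis .
qed

lemma eq_mult_inv_mat_iff:
  fixes A B H :: "real mat"
  assumes H: "H \<in> carrier_mat n n" "invertible_mat H"
    and A: "A \<in> carrier_mat m n" and B: "B \<in> carrier_mat m n"
  shows "A = B * inv_mat H \<longleftrightarrow> A * H = B"
  using inv_mat[OF H] A B H(1) by (auto simp: assoc_mult_mat_dim)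

lemma transpose_inv_mat_mult_cancel:
  fixes A B H :: "real mat"
  assumes H: "H \<in> carrier_mat n n" "invertible_mat H" and B: "B \<in> carrier_mat n m"
    and A: "A = transpose_mat (inv_mat H) * B"
  shows "transpose_mat H * A = B" "transpose_mat A * H = transpose_mat B"
proof -
  have "transpose_mat H * transpose_mat (inv_mat H) = 1\<^sub>m n"
    using inv_mat[OF H] H(1) by (simp add: transpose_mult_dim[symmetric])
  then show HA: "transpose_mat H * A = B"
    unfolding A using inv_mat(1)[OF H] H(1) B by (simp add: assoc_mult_mat_dim[symmetric])
  show "transpose_mat A * H = transpose_mat B"
    using arg_cong[OF HA, of transpose_mat] inv_mat(1)[OF H] H(1) B
    unfolding A by (simp add: transpose_mult_dim)
qed

lemma invertible_mat_factors:
  fixes X Y H :: "real mat"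
  assumes X: "X \<in> carrier_mat n n" "invertible_mat X"
    and Y: "Y \<in> carrier_mat n n" and H: "H \<in> carrier_mat n n" and YH: "Y * H = X"
  shows "invertible_mat Y" "H = inv_mat Y * X" "inv_mat H = inv_mat X * Y"
proof -
  note X' = inv_mat[OF X]
  have HX: "H * inv_mat X \<in> carrier_mat n n" and XY: "inv_mat X * Y \<in> carrier_mat n n"
    using H Y X'(1) by auto
  have right_inv: "Y * (H * inv_mat X) = 1\<^sub>m n"
    using X'(2) by (simp add: YH assoc_mult_mat[OF Y H X'(1), symmetric])
  then show "invertible_mat Y" by (rule invertible_matI[OF Y HX])
  have "inv_mat Y * X = H * (inv_mat X * X)"
    using inv_mat_eqI[OF Y HX right_inv] assoc_mult_mat[OF H X'(1) X(1)] by simp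
  then show "H = inv_mat Y * X" using X'(3) H by simp
  have "inv_mat X * Y * H = 1\<^sub>m n"
    using X'(3) by (simp add: YH assoc_mult_mat[OF X'(1) Y H])
  then have "H * (inv_mat X * Y) = 1\<^sub>m n"
    by (rule mat_mult_left_right_inverse[OF XY H])
  then show "inv_mat H = inv_mat X * Y" by (rule inv_mat_eqI[OF H XY])
qed

lemma intertwining_invariant:
  fixes P M N U V X Y :: "real mat"
  assumes P: "P \<in> carrier_mat n n" and M: "M \<in> carrier_mat n n"
    and U: "U \<in> carrier_mat n k" and V: "V \<in> carrier_mat n k"
    and X: "X \<in> carrier_mat k k" "invertible_mat X" and Y: "Y \<in> carrier_mat k k"
    and PM: "P * M = N" and MV: "M * V = U * X" and NV: "N * V = U * Y"
  shows "P * U = U * (Y * inv_mat X)"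
proof -
  have "P * U * X = U * Y"
    using assoc_mult_mat[OF P U X(1)] assoc_mult_mat[OF P M V] MV PM NV by simp
  then have "P * U = U * Y * inv_mat X"
    using eq_mult_inv_mat_iff[OF X, of "P * U" n "U * Y"] P U Y by auto
  then show ?thesis
    using assoc_mult_mat[OF U Y inv_mat(1)[OF X]] by simp
qed

lemma similar_mat_mult_inv_mat:
  fixes P Q :: "real mat"
  assumes P: "P \<in> carrier_mat n n" "invertible_mat P" and Q: "Q \<in> carrier_mat n n"
  shows "similar_mat (Q * inv_mat P) (inv_mat P * Q)"
  using inv_mat[OF P] P(1) Q
  by (intro similar_matI[of _ _ P "inv_mat P" n]) (auto simp: assoc_mult_mat_dim[symmetric])

lemma similar_mat_transpose:
  fixes A B :: "'a :: comm_semiring_1 mat"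
  assumes "similar_mat A B"
  shows "similar_mat (transpose_mat A) (transpose_mat B)"
proof -
  obtain n P Q where c: "{A, B, P, Q} \<subseteq> carrier_mat n n"
    and PQ: "P * Q = 1\<^sub>m n" and QP: "Q * P = 1\<^sub>m n" and A: "A = P * B * Q"
    using similar_matD[OF assms] by blast
  show ?thesis
  proof (rule similar_matI[of _ _ "transpose_mat Q" "transpose_mat P" n])
    show "transpose_mat Q * transpose_mat P = 1\<^sub>m n" "transpose_mat P * transpose_mat Q = 1\<^sub>m n"
      using c PQ QP by (auto simp: transpose_mult_dim[symmetric])
    show "transpose_mat A = transpose_mat Q * transpose_mat B * transpose_mat P"
      using c unfolding A by (auto simp: transpose_mult_dim assoc_mult_mat_dim)
  qed (use c in auto)
qed

lemma similar_mat_transpose_inv_mat_factor: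
  fixes X Y H :: "real mat"
  assumes X: "X \<in> carrier_mat n n" "invertible_mat X"
    and Y: "Y \<in> carrier_mat n n" and H: "H \<in> carrier_mat n n" and YH: "Y * H = X"
  shows "similar_mat (transpose_mat (inv_mat X) * transpose_mat Y) (transpose_mat (inv_mat H))"
proof -
  have "similar_mat (Y * inv_mat X) (inv_mat H)"
    using similar_mat_mult_inv_mat[OF X Y] invertible_mat_factors(3)[OF X Y H YH] by simp
  then show ?thesis
    using similar_mat_transpose transpose_mult_dim inv_mat(1)[OF X] Y by fastforce
qed

lemma append_rows_eq_iff:
  fixes P P' Q Q' :: "'a :: zero mat"
  assumes "P \<in> carrier_mat n1 k" "P' \<in> carrier_mat n1 k"
    and "Q \<in> carrier_mat n2 k" "Q' \<in> carrier_mat n2 k"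
  shows "P @\<^sub>r Q = P' @\<^sub>r Q' \<longleftrightarrow> P = P' \<and> Q = Q'"
proof
  assume eq: "P @\<^sub>r Q = P' @\<^sub>r Q'"
  have entry: "(P @\<^sub>r Q) $$ (i, j) = (P' @\<^sub>r Q') $$ (i, j)" for i j
    using eq by simp
  have "P = P'"
  proof (rule eq_matI)
    fix i j assume "i < dim_row P'" "j < dim_col P'"
    then show "P $$ (i, j) = P' $$ (i, j)"
      using entry[of i j] assms by (auto simp: append_rows_def)
  qed (use assms in auto)
  moreover have "Q = Q'"
  proof (rule eq_matI)
    fix i j assume "i < dim_row Q'" "j < dim_col Q'"
    then show "Q $$ (i, j) = Q' $$ (i, j)"
      using entry[of "n1 + i" j] assms by (auto simp: append_rows_def)
  qed (use assms in auto)
  ultimately show "P = P' \<and> Q = Q'" ..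
qed simp

lemma mult_append_rows:
  fixes P Q H :: "'a :: semiring_0 mat"
  assumes P: "P \<in> carrier_mat n1 k" and Q: "Q \<in> carrier_mat n2 k" and H: "H \<in> carrier_mat k m"
  shows "(P @\<^sub>r Q) * H = (P * H) @\<^sub>r (Q * H)"
proof -
  have "H = four_block_mat H (0\<^sub>m k 0) (0\<^sub>m 0 m) (0\<^sub>m 0 0)"
    using H by (intro eq_matI) auto
  then have "(P @\<^sub>r Q) * H
      = four_block_mat P (0\<^sub>m n1 0) Q (0\<^sub>m n2 0) * four_block_mat H (0\<^sub>m k 0) (0\<^sub>m 0 m) (0\<^sub>m 0 0)"
    using P Q unfolding append_rows_def by auto
  also have "\<dots> = (P * H) @\<^sub>r (Q * H)"
    using P Q H unfolding append_rows_def
    by (subst mult_four_block_mat[of _ n1 k _ 0 _ n2 _ _ m _ 0]) auto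
  finally show ?thesis .
qed

lemma four_block_mat_mult_append_rows:
  fixes A B C D P Q :: "'a :: semiring_0 mat"
  assumes "A \<in> carrier_mat nr1 n1" "B \<in> carrier_mat nr1 n2"
    and "C \<in> carrier_mat nr2 n1" "D \<in> carrier_mat nr2 n2"
    and "P \<in> carrier_mat n1 k" "Q \<in> carrier_mat n2 k"
  shows "four_block_mat A B C D * (P @\<^sub>r Q) = (A * P + B * Q) @\<^sub>r (C * P + D * Q)"
  using assms unfolding append_rows_def
  by (subst mult_four_block_mat[of _ nr1 n1 _ n2 _ nr2 _ _ k _ 0]) auto

(* The graph of L is the column space of [I; L], its cograph that of [L; I]. *)
lemma four_block_mat_mult_graph_iff:
  fixes A B C D L G :: "'a :: ring_1 mat"
  assumes A: "A \<in> carrier_mat n1 n1" and B: "B \<in> carrier_mat n1 n2"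
    and C: "C \<in> carrier_mat n2 n1" and D: "D \<in> carrier_mat n2 n2"
    and L: "L \<in> carrier_mat n2 n1" and G: "G \<in> carrier_mat n1 n1"
  shows "four_block_mat A B C D * (1\<^sub>m n1 @\<^sub>r L) = (1\<^sub>m n1 @\<^sub>r L) * G
    \<longleftrightarrow> G = A + B * L \<and> C + D * L = L * G"
proof -
  have "four_block_mat A B C D * (1\<^sub>m n1 @\<^sub>r L) = (A + B * L) @\<^sub>r (C + D * L)"
    using four_block_mat_mult_append_rows[OF A B C D one_carrier_mat L] A C by simp
  moreover have "(1\<^sub>m n1 @\<^sub>r L) * G = G @\<^sub>r (L * G)"
    using mult_append_rows[OF one_carrier_mat L G] G by simp
  ultimately show ?thesis
    using append_rows_eq_iff[of "A + B * L" n1 n1 G "C + D * L" n2 "L * G"] assms by auto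
qed

lemma four_block_mat_mult_cograph:
  fixes A B C D L :: "'a :: ring_1 mat"
  assumes D: "D \<in> carrier_mat n1 n1" and C: "C \<in> carrier_mat n1 n2"
    and B: "B \<in> carrier_mat n2 n1" and A: "A \<in> carrier_mat n2 n2"
    and L: "L \<in> carrier_mat n1 n2" and riccati: "D * L + C = L * (A + B * L)"
  shows "four_block_mat D C B A * (L @\<^sub>r 1\<^sub>m n2) = (L @\<^sub>r 1\<^sub>m n2) * (A + B * L)"
proof -
  have "four_block_mat D C B A * (L @\<^sub>r 1\<^sub>m n2) = (D * L + C) @\<^sub>r (B * L + A)"
    using four_block_mat_mult_append_rows[OF D C B A L one_carrier_mat] C A by simp
  also have "\<dots> = (L * (A + B * L)) @\<^sub>r (A + B * L)"
    using assms by (simp add: riccati comm_add_mat[of _ n2 n2])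
  also have "\<dots> = (L @\<^sub>r 1\<^sub>m n2) * (A + B * L)"
    using mult_append_rows[OF L one_carrier_mat, of "A + B * L" n2] A B L by simp
  finally show ?thesis .
qed

lemma cograph_of_transpose_graph:
  fixes A B C D L G :: "'a :: comm_ring_1 mat"
  assumes D: "D \<in> carrier_mat n1 n1" and C: "C \<in> carrier_mat n1 n2"
    and B: "B \<in> carrier_mat n2 n1" and A: "A \<in> carrier_mat n2 n2"
    and L: "L \<in> carrier_mat n1 n2" and G: "G \<in> carrier_mat n1 n1"
    and inv: "transpose_mat (four_block_mat D C B A) * (1\<^sub>m n1 @\<^sub>r - transpose_mat L)
      = (1\<^sub>m n1 @\<^sub>r - transpose_mat L) * G"
  shows "transpose_mat G = D - L * B" "D * L + C = L * (A + B * L)"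
proof -
  have G_eq: "G = transpose_mat D + transpose_mat B * - transpose_mat L"
    and Ct: "transpose_mat C + transpose_mat A * - transpose_mat L = - transpose_mat L * G"
    using inv assms
    by (simp_all add: transpose_four_block_mat[OF D C B A] four_block_mat_mult_graph_iff)
  show Gt: "transpose_mat G = D - L * B"
    unfolding G_eq using assms
    by (simp add: transpose_add[of _ n1 n1] transpose_minus[of _ n1 n1] transpose_mult_dim
        transpose_uminus add_uminus_minus_mat[of _ n1 n1])
  have CT: "C + - (L * A) = - (D * L - L * (B * L))"
    using arg_cong[OF Ct, of transpose_mat] assms
    by (simp add: transpose_add transpose_uminus transpose_mult_dim mat_ring_dim Gt)
  show "D * L + C = L * (A + B * L)"
  proof (rule eq_matI)
    fix i j assume ij: "i < dim_row (L * (A + B * L))" "j < dim_col (L * (A + B * L))"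
    have "(C + - (L * A)) $$ (i, j) = (- (D * L - L * (B * L))) $$ (i, j)"
      using CT by simp
    then show "(D * L + C) $$ (i, j) = (L * (A + B * L)) $$ (i, j)"
      using assms ij by (simp add: mat_ring_dim algebra_simps)
  qed (use assms in auto)
qed

lemma lower_unipotent_inverse:
  fixes L :: "'a :: ring_1 mat"
  assumes L: "L \<in> carrier_mat n2 n1"
  shows "four_block_mat (1\<^sub>m n1) (0\<^sub>m n1 n2) (- L) (1\<^sub>m n2)
    * four_block_mat (1\<^sub>m n1) (0\<^sub>m n1 n2) L (1\<^sub>m n2) = 1\<^sub>m (n1 + n2)"
  using L by (simp add: mult_four_block_mat[of _ n1 n1 _ n2 _ n2 _ _ n1 _ n2])

lemma upper_unipotent_inverse:
  fixes L :: "'a :: ring_1 mat"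
  assumes L: "L \<in> carrier_mat n1 n2"
  shows "four_block_mat (1\<^sub>m n1) (- L) (0\<^sub>m n2 n1) (1\<^sub>m n2)
    * four_block_mat (1\<^sub>m n1) L (0\<^sub>m n2 n1) (1\<^sub>m n2) = 1\<^sub>m (n1 + n2)"
  using L
  by (simp add: mult_four_block_mat[of _ n1 n1 _ n2 _ n2 _ _ n1 _ n2] add_uminus_minus_mat[OF L L])

lemma lower_unipotent_block_triangularize:
  fixes A B C D L :: "'a :: ring_1 mat"
  assumes A: "A \<in> carrier_mat n1 n1" and B: "B \<in> carrier_mat n1 n2"
    and C: "C \<in> carrier_mat n2 n1" and D: "D \<in> carrier_mat n2 n2"
    and L: "L \<in> carrier_mat n2 n1" and riccati: "C + D * L = L * (A + B * L)"
  shows "four_block_mat (1\<^sub>m n1) (0\<^sub>m n1 n2) (- L) (1\<^sub>m n2) * four_block_mat A B C D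
      * four_block_mat (1\<^sub>m n1) (0\<^sub>m n1 n2) L (1\<^sub>m n2)
    = four_block_mat (A + B * L) B (0\<^sub>m n2 n1) (D - L * B)"
proof -
  let ?H = "A + B * L"
  have H: "?H \<in> carrier_mat n1 n1" using A B L by auto
  have "four_block_mat A B C D * four_block_mat (1\<^sub>m n1) (0\<^sub>m n1 n2) L (1\<^sub>m n2)
      = four_block_mat ?H B (L * ?H) D"
    using assms
    by (simp add: mult_four_block_mat[of _ n1 n1 _ n2 _ n2 _ _ n1 _ n2] riccati[symmetric])
  moreover have "four_block_mat (1\<^sub>m n1) (0\<^sub>m n1 n2) (- L) (1\<^sub>m n2)
        * four_block_mat ?H B (L * ?H) D
      = four_block_mat ?H B (0\<^sub>m n2 n1) (D - L * B)"
    using assms H by (simp add: mult_four_block_mat[of _ n1 n1 _ n2 _ n2 _ _ n1 _ n2])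
      (intro eq_matI; simp)
  ultimately show ?thesis
    using assms by (simp add: assoc_mult_mat_dim)
qed

lemma upper_unipotent_block_triangularize:
  fixes A B C D L :: "'a :: ring_1 mat"
  assumes D: "D \<in> carrier_mat n1 n1" and C: "C \<in> carrier_mat n1 n2"
    and B: "B \<in> carrier_mat n2 n1" and A: "A \<in> carrier_mat n2 n2"
    and L: "L \<in> carrier_mat n1 n2" and riccati: "D * L + C = L * (A + B * L)"
  shows "four_block_mat (1\<^sub>m n1) (- L) (0\<^sub>m n2 n1) (1\<^sub>m n2) * four_block_mat D C B A
      * four_block_mat (1\<^sub>m n1) L (0\<^sub>m n2 n1) (1\<^sub>m n2)
    = four_block_mat (D - L * B) (0\<^sub>m n1 n2) B (A + B * L)"
proof -
  let ?H = "A + B * L"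
  have H: "?H \<in> carrier_mat n2 n2" using A B L by auto
  have "four_block_mat D C B A * four_block_mat (1\<^sub>m n1) L (0\<^sub>m n2 n1) (1\<^sub>m n2)
      = four_block_mat D (L * ?H) B ?H"
    using assms
    by (simp add: mult_four_block_mat[of _ n1 n1 _ n2 _ n2 _ _ n1 _ n2] riccati[symmetric]
        comm_add_mat[of "B * L" n2 n2])
  moreover have "four_block_mat (1\<^sub>m n1) (- L) (0\<^sub>m n2 n1) (1\<^sub>m n2)
        * four_block_mat D (L * ?H) B ?H
      = four_block_mat (D - L * B) (0\<^sub>m n1 n2) B ?H"
    using assms H by (simp add: mult_four_block_mat[of _ n1 n1 _ n2 _ n2 _ _ n1 _ n2])
      (intro eq_matI; simp)
  ultimately show ?thesis
    using assms by (simp add: assoc_mult_mat_dim)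
qed

lemma invariant_subspace_eigenvalue_iff:
  fixes M V H P :: "'a :: field mat"
  assumes M: "M \<in> carrier_mat n n" and V: "V \<in> carrier_mat n k" and H: "H \<in> carrier_mat k k"
    and P: "P \<in> carrier_mat k n" and PV: "P * V = 1\<^sub>m k" and MV: "M * V = V * H"
  shows "(\<exists>x \<in> carrier_vec k. V *\<^sub>v x \<noteq> 0\<^sub>v n \<and> M *\<^sub>v (V *\<^sub>v x) = z \<cdot>\<^sub>v (V *\<^sub>v x))
    \<longleftrightarrow> eigenvalue H z"
proof -
  have V_inj: "x = y" if "x \<in> carrier_vec k" "y \<in> carrier_vec k" "V *\<^sub>v x = V *\<^sub>v y" for x y
  proof -
    have "x = P *\<^sub>v (V *\<^sub>v x)" using PV P V that(1) by (simp flip: assoc_mult_mat_vec)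
    also have "\<dots> = y" using PV P V that(2,3) by (simp flip: assoc_mult_mat_vec)
    finally show ?thesis .
  qed
  have V0: "V *\<^sub>v 0\<^sub>v k = 0\<^sub>v n"
    using V by (intro eq_vecI) (auto simp: scalar_prod_def)
  have MVx: "M *\<^sub>v (V *\<^sub>v x) = V *\<^sub>v (H *\<^sub>v x)" if "x \<in> carrier_vec k" for x
    using M V H that by (simp flip: assoc_mult_mat_vec add: MV)
  have Vz: "V *\<^sub>v (z \<cdot>\<^sub>v x) = z \<cdot>\<^sub>v (V *\<^sub>v x)" if "x \<in> carrier_vec k" for x
    by (rule mult_mat_vec[OF V that])
  show ?thesis
    unfolding eigenvalue_def eigenvector_def
  proof
    assume "\<exists>x \<in> carrier_vec k. V *\<^sub>v x \<noteq> 0\<^sub>v n \<and> M *\<^sub>v (V *\<^sub>v x) = z \<cdot>\<^sub>v (V *\<^sub>v x)"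
    then obtain x where x: "x \<in> carrier_vec k" and Vx: "V *\<^sub>v x \<noteq> 0\<^sub>v n"
      and eigen: "M *\<^sub>v (V *\<^sub>v x) = z \<cdot>\<^sub>v (V *\<^sub>v x)" by blast
    have "H *\<^sub>v x = z \<cdot>\<^sub>v x"
      using V_inj[of "H *\<^sub>v x" "z \<cdot>\<^sub>v x"] MVx[OF x] Vz[OF x] eigen x H by auto
    moreover have "x \<noteq> 0\<^sub>v k" using Vx V0 by auto
    ultimately show "\<exists>v. v \<in> carrier_vec (dim_row H) \<and> v \<noteq> 0\<^sub>v (dim_row H) \<and> H *\<^sub>v v = z \<cdot>\<^sub>v v"
      using x H by auto
  next
    assume "\<exists>v. v \<in> carrier_vec (dim_row H) \<and> v \<noteq> 0\<^sub>v (dim_row H) \<and> H *\<^sub>v v = z \<cdot>\<^sub>v v"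
    then obtain x where x: "x \<in> carrier_vec k" and "x \<noteq> 0\<^sub>v k" and eigen: "H *\<^sub>v x = z \<cdot>\<^sub>v x"
      using H by auto
    then have "V *\<^sub>v x \<noteq> 0\<^sub>v n" using V_inj[OF x zero_carrier_vec] V0 by auto
    moreover have "M *\<^sub>v (V *\<^sub>v x) = z \<cdot>\<^sub>v (V *\<^sub>v x)" using MVx[OF x] Vz[OF x] eigen by simp
    ultimately show "\<exists>x \<in> carrier_vec k. V *\<^sub>v x \<noteq> 0\<^sub>v n \<and> M *\<^sub>v (V *\<^sub>v x) = z \<cdot>\<^sub>v (V *\<^sub>v x)"
      using x by blast
  qed
qed

lemma subspace_spec_eq_spec_mat:
  fixes M V H P :: "real mat"
  assumes M: "M \<in> carrier_mat n n" and V: "V \<in> carrier_mat n k" and H: "H \<in> carrier_mat k k"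
    and P: "P \<in> carrier_mat k n" and PV: "P * V = 1\<^sub>m k" and MV: "M * V = V * H"
  shows "subspace_spec M V = spec_mat H"
proof -
  let ?c = "map_mat complex_of_real"
  have "?c P * ?c V = 1\<^sub>m k"
    using of_real_hom.mat_hom_mult[OF P V] PV of_real_hom.mat_hom_one by metis
  moreover have "?c M * ?c V = ?c V * ?c H"
    using of_real_hom.mat_hom_mult[OF M V] of_real_hom.mat_hom_mult[OF V H] MV by metis
  ultimately have "(\<exists>x \<in> carrier_vec k. ?c V *\<^sub>v x \<noteq> 0\<^sub>v n \<and> ?c M *\<^sub>v (?c V *\<^sub>v x) = z \<cdot>\<^sub>v (?c V *\<^sub>v x))
      \<longleftrightarrow> eigenvalue (?c H) z" for z
    using invariant_subspace_eigenvalue_iff[of "?c M" n "?c V" k "?c H" "?c P"] M V H P by simp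
  then show ?thesis
    unfolding subspace_spec_def spec_mat_def Let_def using V by auto
qed

lemma subspace_spec_graph:
  fixes M L H :: "real mat"
  assumes M: "M \<in> carrier_mat (n1 + n2) (n1 + n2)" and L: "L \<in> carrier_mat n2 n1"
    and H: "H \<in> carrier_mat n1 n1" and inv: "M * (1\<^sub>m n1 @\<^sub>r L) = (1\<^sub>m n1 @\<^sub>r L) * H"
  shows "subspace_spec M (1\<^sub>m n1 @\<^sub>r L) = spec_mat H"
proof (rule subspace_spec_eq_spec_mat[OF M _ H _ _ inv])
  \<comment> \<open>the left inverse [I, 0], as a block matrix with empty bottom rows\<close>
  let ?P = "four_block_mat (1\<^sub>m n1) (0\<^sub>m n1 n2) (0\<^sub>m 0 n1) (0\<^sub>m 0 n2)"
  show "?P \<in> carrier_mat n1 (n1 + n2)"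
    using four_block_carrier_mat[of "1\<^sub>m n1" n1 n1 "0\<^sub>m 0 n2" 0 n2] by simp
  show "?P * (1\<^sub>m n1 @\<^sub>r L) = 1\<^sub>m n1"
    unfolding append_rows_def using L
    by (subst mult_four_block_mat[of _ n1 n1 _ n2 _ 0 _ _ n1 _ 0]) auto
qed (use L in auto)

lemma subspace_spec_cograph:
  fixes M L H :: "real mat"
  assumes M: "M \<in> carrier_mat (n1 + n2) (n1 + n2)" and L: "L \<in> carrier_mat n1 n2"
    and H: "H \<in> carrier_mat n2 n2" and inv: "M * (L @\<^sub>r 1\<^sub>m n2) = (L @\<^sub>r 1\<^sub>m n2) * H"
  shows "subspace_spec M (L @\<^sub>r 1\<^sub>m n2) = spec_mat H"
proof (rule subspace_spec_eq_spec_mat[OF M _ H _ _ inv])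
  let ?P = "four_block_mat (0\<^sub>m n2 n1) (1\<^sub>m n2) (0\<^sub>m 0 n1) (0\<^sub>m 0 n2)"
  show "?P \<in> carrier_mat n2 (n1 + n2)"
    using four_block_carrier_mat[of "0\<^sub>m n2 n1" n2 n1 "0\<^sub>m 0 n2" 0 n2] by simp
  show "?P * (L @\<^sub>r 1\<^sub>m n2) = 1\<^sub>m n2"
    unfolding append_rows_def using L
    by (subst mult_four_block_mat[of _ n2 n1 _ n2 _ 0 _ _ n2 _ 0]) auto
qed (use L in auto)

locale quadratic_game =
  fixes d1 d2 :: nat and A1 B1 D1 A2 B2 D2 :: "real mat"
  assumes A1: "A1 \<in> carrier_mat d1 d1" and B1: "B1 \<in> carrier_mat d2 d1"
    and D1: "D1 \<in> carrier_mat d2 d2" and A2: "A2 \<in> carrier_mat d2 d2"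
    and B2: "B2 \<in> carrier_mat d1 d2" and D2: "D2 \<in> carrier_mat d1 d1"
    and A2_sym: "transpose_mat A2 = A2"
begin

abbreviation M1 :: "real mat" where "M1 \<equiv> four_block_mat A1 (transpose_mat B1) B1 D1"
abbreviation M2 :: "real mat" where "M2 \<equiv> four_block_mat D2 B2 (transpose_mat B2) A2"

lemma M1_carrier: "M1 \<in> carrier_mat (d1 + d2) (d1 + d2)"
  using A1 D1 by auto

lemma M2_carrier: "M2 \<in> carrier_mat (d1 + d2) (d1 + d2)"
  using D2 A2 by auto

lemma transpose_M2: "transpose_mat M2 = four_block_mat (transpose_mat D2) B2 (transpose_mat B2) A2"
  using A2 B2 D2 by (simp add: transpose_four_block_mat A2_sym)

lemma M1_mult_graph:
  assumes L: "L \<in> carrier_mat d2 d1"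
  shows "M1 * (1\<^sub>m d1 @\<^sub>r L) = (A1 + transpose_mat B1 * L) @\<^sub>r (B1 + D1 * L)"
  using four_block_mat_mult_append_rows[OF A1 _ B1 D1 one_carrier_mat L] A1 B1 by simp

lemma transpose_M2_mult_graph:
  assumes L: "L \<in> carrier_mat d2 d1"
  shows "transpose_mat M2 * (1\<^sub>m d1 @\<^sub>r L)
    = (transpose_mat D2 + B2 * L) @\<^sub>r (transpose_mat B2 + A2 * L)"
  unfolding transpose_M2
  using four_block_mat_mult_append_rows[OF _ B2 _ A2 one_carrier_mat L] D2 B2 by simp

lemma fixed_point_factorization:
  assumes M2_inv: "invertible_mat M2" and M1b: "M1b = transpose_mat (inv_mat M2) * M1"
    and L: "L \<in> carrier_mat d2 d1" and H: "H \<in> carrier_mat d1 d1"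
    and graph: "M1b * (1\<^sub>m d1 @\<^sub>r L) = (1\<^sub>m d1 @\<^sub>r L) * H"
  shows "(transpose_mat D2 + B2 * L) * H = A1 + transpose_mat B1 * L"
    and "(transpose_mat B2 + A2 * L) * H = B1 + D1 * L"
proof -
  let ?V = "1\<^sub>m d1 @\<^sub>r L"
  have V: "?V \<in> carrier_mat (d1 + d2) d1" using L by auto
  have M2t: "transpose_mat M2 \<in> carrier_mat (d1 + d2) (d1 + d2)" using M2_carrier by auto
  have M1b_carrier: "M1b \<in> carrier_mat (d1 + d2) (d1 + d2)"
    unfolding M1b using M1_carrier inv_mat[OF M2_carrier M2_inv] by auto
  have "M1 * ?V = transpose_mat M2 * M1b * ?V"
    using transpose_inv_mat_mult_cancel(1)[OF M2_carrier M2_inv M1_carrier M1b] by simp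
  also have "\<dots> = transpose_mat M2 * (?V * H)"
    using assoc_mult_mat[OF M2t M1b_carrier V] graph by simp
  also have "\<dots> = transpose_mat M2 * ?V * H"
    using assoc_mult_mat[OF M2t V H] by simp
  also have "\<dots> = ((transpose_mat D2 + B2 * L) * H) @\<^sub>r ((transpose_mat B2 + A2 * L) * H)"
    unfolding transpose_M2_mult_graph[OF L]
    by (rule mult_append_rows[OF _ _ H]) (use B2 D2 A2 L in auto)
  finally have "(A1 + transpose_mat B1 * L) @\<^sub>r (B1 + D1 * L)
      = ((transpose_mat D2 + B2 * L) * H) @\<^sub>r ((transpose_mat B2 + A2 * L) * H)"
    unfolding M1_mult_graph[OF L] .
  moreover have "A1 + transpose_mat B1 * L \<in> carrier_mat d1 d1" "B1 + D1 * L \<in> carrier_mat d2 d1"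
    and "(transpose_mat D2 + B2 * L) * H \<in> carrier_mat d1 d1"
    and "(transpose_mat B2 + A2 * L) * H \<in> carrier_mat d2 d1"
    using A1 B1 D1 B2 D2 A2 L H by auto
  ultimately show "(transpose_mat D2 + B2 * L) * H = A1 + transpose_mat B1 * L"
    and "(transpose_mat B2 + A2 * L) * H = B1 + D1 * L"
    using append_rows_eq_iff by metis+
qed

lemma consistent_conjecture_graph:
  assumes M1_inv: "invertible_mat M1" and M2b: "M2b = transpose_mat (inv_mat M1) * M2"
    and L1: "L1 \<in> carrier_mat d2 d1" and L2: "L2 \<in> carrier_mat d1 d2"
    and H: "H \<in> carrier_mat d1 d1" "invertible_mat H"
    and X_inv: "invertible_mat (A1 + transpose_mat B1 * L1)"
    and YH: "(transpose_mat D2 + B2 * L1) * H = A1 + transpose_mat B1 * L1"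
    and W2H: "(transpose_mat B2 + A2 * L1) * H = B1 + D1 * L1"
    and L2_def: "transpose_mat L2 = - ((B1 + D1 * L1) * inv_mat (A1 + transpose_mat B1 * L1))"
  shows "transpose_mat M2b * (1\<^sub>m d1 @\<^sub>r - transpose_mat L2)
    = (1\<^sub>m d1 @\<^sub>r - transpose_mat L2)
      * ((transpose_mat D2 + B2 * L1) * inv_mat (A1 + transpose_mat B1 * L1))"
proof -
  define X Y W1 W2 K where "X = A1 + transpose_mat B1 * L1" and "Y = transpose_mat D2 + B2 * L1"
    and "W1 = B1 + D1 * L1" and "W2 = transpose_mat B2 + A2 * L1" and "K = - transpose_mat L2"
  let ?V = "1\<^sub>m d1 @\<^sub>r L1" and ?U = "1\<^sub>m d1 @\<^sub>r K"
  have X: "X \<in> carrier_mat d1 d1" and Y: "Y \<in> carrier_mat d1 d1"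
    and W1: "W1 \<in> carrier_mat d2 d1" and W2: "W2 \<in> carrier_mat d2 d1"
    and K: "K \<in> carrier_mat d2 d1" and V: "?V \<in> carrier_mat (d1 + d2) d1"
    and U: "?U \<in> carrier_mat (d1 + d2) d1"
    using A1 B1 D1 A2 B2 D2 L1 L2 unfolding X_def Y_def W1_def W2_def K_def by auto
  note X_inv = X_inv[folded X_def] and YH = YH[folded X_def Y_def]
    and W2H = W2H[folded W1_def W2_def]
  have "K = W1 * inv_mat X"
    unfolding K_def L2_def X_def W1_def by simp
  then have KX: "K * X = W1"
    using eq_mult_inv_mat_iff[OF X X_inv K W1] by simp
  have "K * Y * H = W1"
    using assoc_mult_mat[OF K Y H(1)] KX YH by simp
  then have KY: "K * Y = W2"
    using eq_mult_inv_mat_iff[OF H, of "K * Y" d2 W1] eq_mult_inv_mat_iff[OF H W2, of W1]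
      K Y W1 W2H by auto
  have "M1 * ?V = ?U * X"
    using M1_mult_graph[OF L1, folded X_def W1_def] mult_append_rows[OF one_carrier_mat K X] X KX
    by simp
  moreover have "transpose_mat M2 * ?V = ?U * Y"
    using transpose_M2_mult_graph[OF L1, folded Y_def W2_def]
      mult_append_rows[OF one_carrier_mat K Y] Y KY
    by simp
  moreover have "transpose_mat M2b \<in> carrier_mat (d1 + d2) (d1 + d2)"
    unfolding M2b using inv_mat(1)[OF M1_carrier M1_inv] M2_carrier by auto
  ultimately show ?thesis
    using intertwining_invariant[OF _ M1_carrier U V X X_inv Y
        transpose_inv_mat_mult_cancel(2)[OF M1_carrier M1_inv M2_carrier M2b]]
    unfolding K_def X_def Y_def by blast
qed

end

theorem proposition4:
  fixes d1 d2 :: nat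
    and A1 D2 :: "real mat" and B1 B2 :: "real mat" and D1 A2 :: "real mat"
    and A1b B1b C1b D1b :: "real mat" and D2b C2b B2b A2b :: "real mat"
    and L1 L2 :: "real mat"
  assumes A1: "A1 \<in> carrier_mat d1 d1" and B1: "B1 \<in> carrier_mat d2 d1" and D1: "D1 \<in> carrier_mat d2 d2"
    and A2: "A2 \<in> carrier_mat d2 d2" and B2: "B2 \<in> carrier_mat d1 d2" and D2: "D2 \<in> carrier_mat d1 d1"
    and A1_pd: "pos_def_mat A1" and A2_pd: "pos_def_mat A2"
    and M1_inv: "invertible_mat (four_block_mat A1 (transpose_mat B1) B1 D1)"
    and M2_inv: "invertible_mat (four_block_mat D2 B2 (transpose_mat B2) A2)"
    and A1b: "A1b \<in> carrier_mat d1 d1" and B1b: "B1b \<in> carrier_mat d1 d2"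
    and C1b: "C1b \<in> carrier_mat d2 d1" and D1b: "D1b \<in> carrier_mat d2 d2"
    and M1b: "four_block_mat A1b B1b C1b D1b =
      transpose_mat (inv_mat (four_block_mat D2 B2 (transpose_mat B2) A2)) *
        four_block_mat A1 (transpose_mat B1) B1 D1"
    and D2b: "D2b \<in> carrier_mat d1 d1" and C2b: "C2b \<in> carrier_mat d1 d2"
    and B2b: "B2b \<in> carrier_mat d2 d1" and A2b: "A2b \<in> carrier_mat d2 d2"
    and M2b: "four_block_mat D2b C2b B2b A2b =
      transpose_mat (inv_mat (four_block_mat A1 (transpose_mat B1) B1 D1)) *
        four_block_mat D2 B2 (transpose_mat B2) A2"
    and L1: "L1 \<in> carrier_mat d2 d1"
    and fp_inv: "invertible_mat (A1b + B1b * L1)"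
    and fp: "L1 = (C1b + D1b * L1) * inv_mat (A1b + B1b * L1)"
    and X_inv: "invertible_mat (A1 + transpose_mat B1 * L1)"
    and L2: "L2 \<in> carrier_mat d1 d2"
    and L2_def: "transpose_mat L2 = - ((B1 + D1 * L1) * inv_mat (A1 + transpose_mat B1 * L1))"
  shows
    "four_block_mat (1\<^sub>m d1) (0\<^sub>m d1 d2) (- L1) (1\<^sub>m d2) * four_block_mat (1\<^sub>m d1) (0\<^sub>m d1 d2) L1 (1\<^sub>m d2)
       = 1\<^sub>m (d1 + d2)
     \<and> four_block_mat (1\<^sub>m d1) (0\<^sub>m d1 d2) (- L1) (1\<^sub>m d2) * four_block_mat A1b B1b C1b D1b
         * four_block_mat (1\<^sub>m d1) (0\<^sub>m d1 d2) L1 (1\<^sub>m d2)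
       = four_block_mat (A1b + B1b * L1) B1b (0\<^sub>m d2 d1) (D1b - L1 * B1b)
     \<and> four_block_mat (1\<^sub>m d1) (- L2) (0\<^sub>m d2 d1) (1\<^sub>m d2) * four_block_mat (1\<^sub>m d1) L2 (0\<^sub>m d2 d1) (1\<^sub>m d2)
       = 1\<^sub>m (d1 + d2)
     \<and> four_block_mat (1\<^sub>m d1) (- L2) (0\<^sub>m d2 d1) (1\<^sub>m d2) * four_block_mat D2b C2b B2b A2b
         * four_block_mat (1\<^sub>m d1) L2 (0\<^sub>m d2 d1) (1\<^sub>m d2)
       = four_block_mat (D2b - L2 * B2b) (0\<^sub>m d1 d2) B2b (A2b + B2b * L2)
     \<and> four_block_mat A1b B1b C1b D1b * (1\<^sub>m d1 @\<^sub>r L1) = (1\<^sub>m d1 @\<^sub>r L1) * (A1b + B1b * L1)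
     \<and> subspace_spec (four_block_mat A1b B1b C1b D1b) (1\<^sub>m d1 @\<^sub>r L1) = spec_mat (A1b + B1b * L1)
     \<and> four_block_mat D2b C2b B2b A2b * (L2 @\<^sub>r 1\<^sub>m d2) = (L2 @\<^sub>r 1\<^sub>m d2) * (A2b + B2b * L2)
     \<and> subspace_spec (four_block_mat D2b C2b B2b A2b) (L2 @\<^sub>r 1\<^sub>m d2) = spec_mat (A2b + B2b * L2)
     \<and> invertible_mat (transpose_mat D2 + B2 * L1)
     \<and> A1b + B1b * L1 = inv_mat (transpose_mat D2 + B2 * L1) * (A1 + transpose_mat B1 * L1)
     \<and> D2b - L2 * B2b = transpose_mat (inv_mat (A1 + transpose_mat B1 * L1))
                          * transpose_mat (transpose_mat D2 + B2 * L1)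
     \<and> invertible_mat (A1b + B1b * L1)
     \<and> similar_mat (D2b - L2 * B2b) (transpose_mat (inv_mat (A1b + B1b * L1)))"
proof -
  \<comment> \<open>positive definiteness enters only through the symmetry of A2\<close>
  interpret quadratic_game d1 d2 A1 B1 D1 A2 B2 D2
    using A1 B1 D1 A2 B2 D2 A2_pd by unfold_locales (auto simp: pos_def_mat_def)
  let ?X = "A1 + transpose_mat B1 * L1" and ?Y = "transpose_mat D2 + B2 * L1"
  have H1: "A1b + B1b * L1 \<in> carrier_mat d1 d1" and X: "?X \<in> carrier_mat d1 d1"
    and Y: "?Y \<in> carrier_mat d1 d1"
    using A1b B1b A1 B1 D2 B2 L1 by auto
  have G: "?Y * inv_mat ?X \<in> carrier_mat d1 d1"
    using inv_mat(1)[OF X X_inv] Y by auto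
  have riccati1: "C1b + D1b * L1 = L1 * (A1b + B1b * L1)"
    using fp eq_mult_inv_mat_iff[OF H1 fp_inv L1] C1b D1b L1 by auto
  then have graph1:
    "four_block_mat A1b B1b C1b D1b * (1\<^sub>m d1 @\<^sub>r L1) = (1\<^sub>m d1 @\<^sub>r L1) * (A1b + B1b * L1)"
    using four_block_mat_mult_graph_iff[OF A1b B1b C1b D1b L1 H1] by simp
  note factorization = fixed_point_factorization[OF M2_inv M1b L1 H1 graph1]
  note cograph2 = cograph_of_transpose_graph[OF D2b C2b B2b A2b L2 G
      consistent_conjecture_graph[OF M1_inv M2b L1 L2 H1 fp_inv X_inv factorization L2_def]]
  have H2': "D2b - L2 * B2b = transpose_mat (inv_mat ?X) * transpose_mat ?Y"
    using cograph2(1) transpose_mult[OF Y inv_mat(1)[OF X X_inv]] by simp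
  note graph2 = four_block_mat_mult_cograph[OF D2b C2b B2b A2b L2 cograph2(2)]
  show ?thesis
    using lower_unipotent_inverse[OF L1] upper_unipotent_inverse[OF L2]
      lower_unipotent_block_triangularize[OF A1b B1b C1b D1b L1 riccati1]
      upper_unipotent_block_triangularize[OF D2b C2b B2b A2b L2 cograph2(2)]
      graph1 subspace_spec_graph[OF _ L1 H1 graph1]
      graph2 subspace_spec_cograph[OF _ L2 _ graph2]
      invertible_mat_factors(1,2)[OF X X_inv Y H1 factorization(1)]
      similar_mat_transpose_inv_mat_factor[OF X X_inv Y H1 factorization(1)]
      H2' fp_inv A1b D1b D2b A2b B2b L2
    by auto
qed

end
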